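(* Consider the multiple-historical-dataset normal setting, the BHM and the BHM-matching normalized power prior (BNPP) described in the context. Define, for $v>0$, $$N_k=\Big(\frac{n_{0k}}{\sigma_{0k}^2}+\frac1v\Big)^{-1},\quad Y_k=\frac{n_{0k}\bar y_{0k}}{\sigma_{0k}^2},\quad C=\sum_{k=1}^K\frac{n_{0k}N_k}{v\sigma_{0k}^2},\quad A=\frac{1+K}{v}-\frac{\sum_{k=1}^KN_k}{v^2},$$ and $$f(v)=\Big[1+\sum_{k=1}^K\frac{n_{0k}/\sigma_{0k}^2}{n_{0k}/\sigma_{0k}^2+1/v}\Big]^{-1},$$ a strictly decreasing bijection from $(0,\infty)$ onto $(1/(K+1),1)$, with $$\Big|\frac{df(v)}{dv}\Big|=f(v)^2\sum_{k=1}^K\frac{n_{0k}}{\sigma_{0k}^2}\Big(\frac{n_{0k}}{\sigma_{0k}^2}+\frac1v\Big)^{-2}v^{-2}.$$ Suppose that the BNPP uses the dataset-specific discounting functions $$h_k(a_0)=\Big(1+\frac{n_{0k}\,f^{-1}(a_0)}{\sigma_{0k}^2}\Big)^{-1}a_0,\qquad k=1,\dots,K,$$ (i.e. with $a_0=f(v)$, $h_k(a_0)=(1+n_{0k}v/\sigma_{0k}^2)^{-1}a_0$), and that the prior density $\pi_a$ of $a_0$ in the BNPP and the prior density $\pi_v$ of $v$ in the BHM satisfy $$Q(f(v))\,\Big|\frac{df(v)}{dv}\Big|\,\pi_a(f(v))\ \propto\ R(v)\,\pi_v(v),\qquad v>0,$$ where $$Q(f(v))=\exp\Big\{-\frac{f(v)}{2C}\Big(\frac1v\sum_{k=1}^KN_kY_k\Big)^2\Big\}\big[f(v)C\big]^{1/2},$$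 $$R(v)=v^{-(K+1)/2}\Big(\prod_{k=1}^KN_k^{1/2}\Big)A^{-1/2}\exp\Big\{\frac{(\sum_{k=1}^KY_kN_k)^2}{2v^2A}\Big\}\exp\Big\{\frac12\sum_{k=1}^KY_k^2N_k\Big\}.$$ Then the marginal posterior density of $\theta$ under the BHM is identical to the marginal posterior density of $\theta$ under the BNPP. Moreover $0<h_k(a_0)<1$ for all $k$.
   Context: Data: current data $y=(y_1,\dots,y_n)$ with $y_i\stackrel{iid}{\sim}N(\theta,\sigma^2)$; $K$ historical datasets $y_{0k}=(y_{0k1},\dots,y_{0kn_{0k}})$, $k=1,\dots,K$, with $y_{0ki}\stackrel{iid}{\sim}N(\theta_{0k},\sigma_{0k}^2)$ in the BHM (and with common mean $\theta$ in the BNPP); $\sigma^2,\sigma_{0k}^2>0$ known. $\bar y$, $\bar y_{0k}$ denote sample means. BHM: $\theta\mid\mu,v\sim N(\mu,v)$, $\theta_{0k}\mid\mu,v\sim N(\mu,v)$ independently for $k=1,\dots,K$, $\pi(\mu)\propto1$ on $\mathbb R$, $v>0$ with prior density $\pi_v$. Its marginal posterior for $\theta$ is $$\pi_{\mathrm{BHM}}(\theta\mid y,y_0)\propto\iiint\pi_v(v)v^{-(K+1)/2}\exp\Big\{-\tfrac{n(\bar y-\theta)^2}{2\sigma^2}-\tfrac12\sum_{k=1}^K\tfrac{n_{0k}(\bar y_{0k}-\theta_{0k})^2}{\sigma_{0k}^2}-\tfrac{(\theta-\mu)^2}{2v}-\tfrac{1}{2v}\sum_{k=1}^K(\theta_{0k}-\mu)^2\Big\}\,d\theta_0\,d\mu\,dv.$$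 BNPP: with $L_k(\theta)=\sigma_{0k}^{-n_{0k}}\exp\{-\frac{1}{2\sigma_{0k}^2}\sum_{i=1}^{n_{0k}}(y_{0ki}-\theta)^2\}$, a scalar global discounting parameter $a_0$ with prior density $\pi_a$, and discounting functions $h_k(a_0)\in(0,1)$, the normalizing constant is $c(a_0)=\int_{\mathbb R}\prod_{k=1}^KL_k(\theta)^{h_k(a_0)}d\theta$ and the marginal posterior of $\theta$ is $$\pi_{\mathrm{BNPP}}(\theta\mid y,y_0)\propto\int\exp\Big\{-\tfrac{1}{2\sigma^2}\sum_{i=1}^n(y_i-\theta)^2\Big\}\frac{\prod_{k=1}^KL_k(\theta)^{h_k(a_0)}}{c(a_0)}\pi_a(a_0)\,da_0.$$ The proportionality in the prior condition is as functions of $v$ (constants not depending on $v$ or $\theta$ are irrelevant); all posteriors are assumed proper. *)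

theory Defs
  imports "HOL-Analysis.Analysis"
begin

text \<open>Conventions: historical datasets are indexed by k in {1..K}; the k-th historical
dataset is y0 k i for i in {1..n0 k}; s0 k is the known variance sigma_{0k}^2.
The current data are y i for i in {1..n}, with known variance s = sigma^2.\<close>

definition mean :: "nat \<Rightarrow> (nat \<Rightarrow> real) \<Rightarrow> real" where
  "mean m x = (\<Sum>i=1..m. x i) / real m"

definition fK :: "nat \<Rightarrow> (nat \<Rightarrow> nat) \<Rightarrow> (nat \<Rightarrow> real) \<Rightarrow> real \<Rightarrow> real" where
  "fK K n0 s0 v = inverse (1 + (\<Sum>k=1..K. (real (n0 k) / s0 k) / (real (n0 k) / s0 k + 1 / v)))"

definition Nk :: "(nat \<Rightarrow> nat) \<Rightarrow> (nat \<Rightarrow> real) \<Rightarrow> real \<Rightarrow> nat \<Rightarrow> real" where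
  "Nk n0 s0 v k = inverse (real (n0 k) / s0 k + 1 / v)"

definition Yk :: "(nat \<Rightarrow> nat) \<Rightarrow> (nat \<Rightarrow> real) \<Rightarrow> (nat \<Rightarrow> nat \<Rightarrow> real) \<Rightarrow> nat \<Rightarrow> real" where
  "Yk n0 s0 y0 k = real (n0 k) * mean (n0 k) (y0 k) / s0 k"

definition Cc :: "nat \<Rightarrow> (nat \<Rightarrow> nat) \<Rightarrow> (nat \<Rightarrow> real) \<Rightarrow> real \<Rightarrow> real" where
  "Cc K n0 s0 v = (\<Sum>k=1..K. real (n0 k) * Nk n0 s0 v k / (v * s0 k))"

definition Aa :: "nat \<Rightarrow> (nat \<Rightarrow> nat) \<Rightarrow> (nat \<Rightarrow> real) \<Rightarrow> real \<Rightarrow> real" where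
  "Aa K n0 s0 v = (1 + real K) / v - (\<Sum>k=1..K. Nk n0 s0 v k) / v\<^sup>2"

text \<open>Q(f(v)), written as a function of v\<close>
definition Qf :: "nat \<Rightarrow> (nat \<Rightarrow> nat) \<Rightarrow> (nat \<Rightarrow> real) \<Rightarrow> (nat \<Rightarrow> nat \<Rightarrow> real) \<Rightarrow> real \<Rightarrow> real" where
  "Qf K n0 s0 y0 v =
     exp (- (fK K n0 s0 v / (2 * Cc K n0 s0 v)) *
            ((1 / v) * (\<Sum>k=1..K. Nk n0 s0 v k * Yk n0 s0 y0 k))\<^sup>2)
     * sqrt (fK K n0 s0 v * Cc K n0 s0 v)"

definition Rf :: "nat \<Rightarrow> (nat \<Rightarrow> nat) \<Rightarrow> (nat \<Rightarrow> real) \<Rightarrow> (nat \<Rightarrow> nat \<Rightarrow> real) \<Rightarrow> real \<Rightarrow> real" where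
  "Rf K n0 s0 y0 v =
     v powr (- (real K + 1) / 2) * (\<Prod>k=1..K. sqrt (Nk n0 s0 v k))
     * Aa K n0 s0 v powr (- 1 / 2)
     * exp ((\<Sum>k=1..K. Yk n0 s0 y0 k * Nk n0 s0 v k)\<^sup>2 / (2 * v\<^sup>2 * Aa K n0 s0 v))
     * exp ((1 / 2) * (\<Sum>k=1..K. (Yk n0 s0 y0 k)\<^sup>2 * Nk n0 s0 v k))"

definition hk :: "nat \<Rightarrow> (nat \<Rightarrow> nat) \<Rightarrow> (nat \<Rightarrow> real) \<Rightarrow> nat \<Rightarrow> real \<Rightarrow> real" where
  "hk K n0 s0 k a0 = inverse (1 + real (n0 k) * inv_into {0<..} (fK K n0 s0) a0 / s0 k) * a0"

definition bhm_kernel :: "nat \<Rightarrow> (nat \<Rightarrow> nat) \<Rightarrow> (nat \<Rightarrow> real) \<Rightarrow> (nat \<Rightarrow> nat \<Rightarrow> real)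
    \<Rightarrow> nat \<Rightarrow> real \<Rightarrow> (nat \<Rightarrow> real) \<Rightarrow> (real \<Rightarrow> real) \<Rightarrow> real \<Rightarrow> ennreal" where
  "bhm_kernel K n0 s0 y0 n s y piv \<theta> =
    (\<integral>\<^sup>+ v. indicator {0<..} v *
      (\<integral>\<^sup>+ \<mu>. (\<integral>\<^sup>+ \<theta>0.
         ennreal (piv v * v powr (- (real K + 1) / 2) *
           exp (- real n * (mean n y - \<theta>)\<^sup>2 / (2 * s)
                - (1 / 2) * (\<Sum>k=1..K. real (n0 k) * (mean (n0 k) (y0 k) - \<theta>0 k)\<^sup>2 / s0 k)
                - (\<theta> - \<mu>)\<^sup>2 / (2 * v)
                - (1 / (2 * v)) * (\<Sum>k=1..K. (\<theta>0 k - \<mu>)\<^sup>2)))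
       \<partial>(PiM {1..K} (\<lambda>_. lborel))) \<partial>lborel) \<partial>lborel)"

definition Lk :: "(nat \<Rightarrow> nat) \<Rightarrow> (nat \<Rightarrow> real) \<Rightarrow> (nat \<Rightarrow> nat \<Rightarrow> real) \<Rightarrow> nat \<Rightarrow> real \<Rightarrow> real" where
  "Lk n0 s0 y0 k \<theta> = sqrt (s0 k) powr (- real (n0 k)) *
     exp (- (1 / (2 * s0 k)) * (\<Sum>i=1..n0 k. (y0 k i - \<theta>)\<^sup>2))"

definition cnorm :: "nat \<Rightarrow> (nat \<Rightarrow> nat) \<Rightarrow> (nat \<Rightarrow> real) \<Rightarrow> (nat \<Rightarrow> nat \<Rightarrow> real) \<Rightarrow> real \<Rightarrow> real" where
  "cnorm K n0 s0 y0 a0 =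
     (\<integral>\<theta>. (\<Prod>k=1..K. Lk n0 s0 y0 k \<theta> powr hk K n0 s0 k a0) \<partial>lborel)"

text \<open>Unnormalized BNPP marginal posterior kernel of theta; a0 ranges over the
  range (1/(K+1), 1) of f, where the discounting functions are defined.\<close>
definition bnpp_kernel :: "nat \<Rightarrow> (nat \<Rightarrow> nat) \<Rightarrow> (nat \<Rightarrow> real) \<Rightarrow> (nat \<Rightarrow> nat \<Rightarrow> real)
    \<Rightarrow> nat \<Rightarrow> real \<Rightarrow> (nat \<Rightarrow> real) \<Rightarrow> (real \<Rightarrow> real) \<Rightarrow> real \<Rightarrow> ennreal" where
  "bnpp_kernel K n0 s0 y0 n s y pia \<theta> =
    (\<integral>\<^sup>+ a0. indicator {1 / (real K + 1)<..<1} a0 *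
       ennreal (exp (- (1 / (2 * s)) * (\<Sum>i=1..n. (y i - \<theta>)\<^sup>2)) *
         (\<Prod>k=1..K. Lk n0 s0 y0 k \<theta> powr hk K n0 s0 k a0) / cnorm K n0 s0 y0 a0 * pia a0)
     \<partial>lborel)"

definition bhm_post where
  "bhm_post K n0 s0 y0 n s y piv \<theta> =
     bhm_kernel K n0 s0 y0 n s y piv \<theta> / (\<integral>\<^sup>+ t. bhm_kernel K n0 s0 y0 n s y piv t \<partial>lborel)"

definition bnpp_post where
  "bnpp_post K n0 s0 y0 n s y pia \<theta> =
     bnpp_kernel K n0 s0 y0 n s y pia \<theta> / (\<integral>\<^sup>+ t. bnpp_kernel K n0 s0 y0 n s y pia t \<partial>lborel)"

end

theory Submission
  imports Defs "HOL-Probability.Probability"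
begin

text \<open>
  Both marginal posteriors are mixtures over the variance \<open>v\<close> of one and the same Gaussian
  kernel in \<open>\<theta>\<close> (\<open>cond_post_kernel\<close>). For the BHM, the Gaussian integrals over \<open>\<theta>\<^sub>0\<close> and \<open>\<mu>\<close>
  leave the mixing weight \<open>R(v) \<pi>\<^sub>v(v)\<close>. For the BNPP, the discounting functions are chosen so
  that at \<open>a\<^sub>0 = f(v)\<close> the power prior has total precision \<open>f(v) C\<close>; being Gaussian, its
  normalised form is \<open>Q(f(v)) / \<surd>(2\<pi>)\<close> times the same kernel, and the substitution
  \<open>a\<^sub>0 = f(v)\<close> along the decreasing bijection \<open>f\<close> contributes \<open>|f'(v)|\<close>. The prior matching
  condition makes the two mixing weights proportional, so the normalised posteriors agree.
\<close>

lemma nn_integral_indicator_incseq: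
  fixes f :: "'a \<Rightarrow> ennreal"
  assumes A: "incseq A" and [measurable]: "\<And>i. A i \<in> sets M" "f \<in> borel_measurable M"
  shows "(\<integral>\<^sup>+x. f x * indicator (\<Union>i. A i) x \<partial>M) = (SUP i. \<integral>\<^sup>+x. f x * indicator (A i) x \<partial>M)"
proof -
  have "f x * indicator (\<Union>i. A i) x = (SUP i. f x * indicator (A i) x)" for x
  proof (cases "x \<in> (\<Union>i. A i)")
    case True
    then obtain i where "x \<in> A i" by blast
    then have "f x * indicator (A i) x = f x" by simp
    then have "f x \<le> (SUP i. f x * indicator (A i) x)"
      by (metis UNIV_I SUP_upper)
    moreover have "f x * indicator (A j) x \<le> f x" for j
      by (simp add: indicator_def)
    ultimately show ?thesis
      using True by (intro antisym SUP_least) auto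
  qed simp
  moreover have "incseq (\<lambda>i x. f x * indicator (A i) x)"
    using A by (intro incseq_SucI le_funI mult_left_mono) (auto simp: incseq_Suc_iff indicator_def)
  ultimately show ?thesis
    by (simp add: nn_integral_monotone_convergence_SUP)
qed

lemma normalized_eq_if_proportional:
  fixes f g H :: "'a \<Rightarrow> ennreal"
  assumes "c > 0" "d > 0" and [measurable]: "H \<in> borel_measurable M"
    and fg: "\<And>t. f t = ennreal c * H t" "\<And>t. g t = ennreal d * H t"
  shows "f x / (\<integral>\<^sup>+t. f t \<partial>M) = g x / (\<integral>\<^sup>+t. g t \<partial>M)"
proof -
  have "ennreal e * H x / (\<integral>\<^sup>+t. ennreal e * H t \<partial>M) = H x / (\<integral>\<^sup>+t. H t \<partial>M)" if "e > 0" for e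
    using that divide_mult_eq[of "ennreal e" "H x" "\<integral>\<^sup>+t. H t \<partial>M"]
    by (simp add: nn_integral_cmult mult.commute)
  with assms(1,2) show ?thesis
    unfolding fg by simp
qed

lemma nn_integral_pos_cmult_cong:
  fixes f g h :: "real \<Rightarrow> real"
  assumes c: "c \<ge> 0" and fg: "\<And>v. v > 0 \<Longrightarrow> f v = c * g v"
    and [measurable]: "g \<in> borel_measurable borel" "h \<in> borel_measurable borel"
  shows "(\<integral>\<^sup>+v. indicator {0<..} v * ennreal (f v * h v) \<partial>lborel)
       = ennreal c * (\<integral>\<^sup>+v. indicator {0<..} v * ennreal (g v * h v) \<partial>lborel)"
proof -
  have "(\<integral>\<^sup>+v. indicator {0<..} v * ennreal (f v * h v) \<partial>lborel)
      = (\<integral>\<^sup>+v. ennreal c * (indicator {0<..} v * ennreal (g v * h v)) \<partial>lborel)"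
    using c by (intro nn_integral_cong) (simp add: fg ennreal_mult' mult.assoc split: split_indicator)
  also have "\<dots> = ennreal c * (\<integral>\<^sup>+v. indicator {0<..} v * ennreal (g v * h v) \<partial>lborel)"
    by (rule nn_integral_cmult) measurable
  finally show ?thesis .
qed

section \<open>Gaussian integrals\<close>

lemma has_bochner_integral_gaussian_kernel:
  fixes p b :: real assumes p: "p > 0"
  shows "has_bochner_integral lborel (\<lambda>x. exp (- p * x\<^sup>2 / 2 + b * x))
           (sqrt (2 * pi / p) * exp (b\<^sup>2 / (2 * p)))"
proof -
  have kernel: "exp (- p * x\<^sup>2 / 2 + b * x)
      = sqrt (2 * pi / p) * exp (b\<^sup>2 / (2 * p)) * normal_density (b / p) (1 / sqrt p) x" for x
  proof -
    have "exp (- p * x\<^sup>2 / 2 + b * x) = exp (b\<^sup>2 / (2 * p)) * exp (- (x - b / p)\<^sup>2 / (2 * (1 / p)))"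
      unfolding exp_add[symmetric] using p by (simp add: field_simps power2_eq_square)
    moreover have "sqrt (2 * pi / p) * (1 / sqrt (2 * pi * (1 / p))) = 1"
      using p by (simp add: real_sqrt_divide field_simps)
    ultimately show ?thesis
      using p by (simp add: normal_density_def power_divide)
  qed
  have "has_bochner_integral lborel (normal_density (b / p) (1 / sqrt p)) 1"
    using p by (simp add: has_bochner_integral_iff)
  from has_bochner_integral_mult_right[OF this, of "sqrt (2 * pi / p) * exp (b\<^sup>2 / (2 * p))"]
  show ?thesis
    unfolding kernel by simp
qed

lemma nn_integral_gaussian_kernel:
  fixes p b d :: real assumes "p > 0"
  shows "(\<integral>\<^sup>+x. ennreal (exp (- p * x\<^sup>2 / 2 + b * x + d)) \<partial>lborel)
       = ennreal (sqrt (2 * pi / p) * exp (b\<^sup>2 / (2 * p) + d))"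
proof -
  have "has_bochner_integral lborel (\<lambda>x. exp d * exp (- p * x\<^sup>2 / 2 + b * x))
          (exp d * (sqrt (2 * pi / p) * exp (b\<^sup>2 / (2 * p))))"
    by (rule has_bochner_integral_mult_right[OF has_bochner_integral_gaussian_kernel[OF assms]])
  then show ?thesis
    by (subst nn_integral_eq_integral)
       (auto simp: has_bochner_integral_iff exp_add mult_ac)
qed

lemma gaussian_kernel_normalized:
  fixes g :: "real \<Rightarrow> real"
  assumes P: "P > 0" and W: "W > 0" and g: "\<And>x. g x = W * exp (- P * x\<^sup>2 / 2 + B * x)"
  shows "g \<theta> / integral\<^sup>L lborel g
       = exp (- P * \<theta>\<^sup>2 / 2 + B * \<theta> - B\<^sup>2 / (2 * P)) / sqrt (2 * pi / P)"
proof -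
  have "integral\<^sup>L lborel g = W * (sqrt (2 * pi / P) * exp (B\<^sup>2 / (2 * P)))"
    unfolding g[abs_def]
    by (rule has_bochner_integral_integral_eq
          [OF has_bochner_integral_mult_right[OF has_bochner_integral_gaussian_kernel[OF P]]])
  moreover have "sqrt (2 * pi / P) > 0"
    using P by simp
  ultimately show ?thesis
    using W by (simp add: g exp_diff)
qed

lemma nn_integral_PiM_gaussian_kernels:
  fixes p b d :: "'i \<Rightarrow> real"
  assumes I: "finite I" and p: "\<And>k. k \<in> I \<Longrightarrow> p k > 0"
  shows "(\<integral>\<^sup>+x. ennreal (exp (\<Sum>k\<in>I. - p k * (x k)\<^sup>2 / 2 + b k * x k + d k)) \<partial>PiM I (\<lambda>_. lborel))
       = ennreal (\<Prod>k\<in>I. sqrt (2 * pi / p k) * exp ((b k)\<^sup>2 / (2 * p k) + d k))"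
proof -
  interpret product_sigma_finite "\<lambda>_. lborel :: real measure" by standard
  have "(\<integral>\<^sup>+x. ennreal (exp (\<Sum>k\<in>I. - p k * (x k)\<^sup>2 / 2 + b k * x k + d k)) \<partial>PiM I (\<lambda>_. lborel))
      = (\<integral>\<^sup>+x. (\<Prod>k\<in>I. ennreal (exp (- p k * (x k)\<^sup>2 / 2 + b k * x k + d k))) \<partial>PiM I (\<lambda>_. lborel))"
    using I by (simp add: exp_sum prod_ennreal)
  also have "\<dots> = (\<Prod>k\<in>I. \<integral>\<^sup>+t. ennreal (exp (- p k * t\<^sup>2 / 2 + b k * t + d k)) \<partial>lborel)"
    by (rule product_nn_integral_prod[OF I]) auto
  also have "\<dots> = (\<Prod>k\<in>I. ennreal (sqrt (2 * pi / p k) * exp ((b k)\<^sup>2 / (2 * p k) + d k)))"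
    by (intro prod.cong refl nn_integral_gaussian_kernel p)
  also have "\<dots> = ennreal (\<Prod>k\<in>I. sqrt (2 * pi / p k) * exp ((b k)\<^sup>2 / (2 * p k) + d k))"
    by (rule prod_ennreal) (simp add: less_imp_le p)
  finally show ?thesis .
qed

section \<open>Substitution along a decreasing bijection of the half-line\<close>

lemma nn_integral_substitution_antimono:
  fixes \<phi> D F :: "real \<Rightarrow> real"
  assumes [measurable]: "F \<in> borel_measurable borel" "\<phi> \<in> borel_measurable borel"
      "D \<in> borel_measurable borel"
    and deriv: "\<And>x. x \<in> {u..w} \<Longrightarrow> (\<phi> has_real_derivative D x) (at x)"
    and cont: "continuous_on {u..w} D" and nonpos: "\<And>x. x \<in> {u..w} \<Longrightarrow> D x \<le> 0"
    and "u \<le> w"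
  shows "(\<integral>\<^sup>+x. F x * indicator {\<phi> w..\<phi> u} x \<partial>lborel)
       = (\<integral>\<^sup>+x. F (\<phi> x) * - D x * indicator {u..w} x \<partial>lborel)"
proof -
  \<comment> \<open>Reflect, so that the library rule (for a nonnegative derivative) applies to \<open>x \<mapsto> \<phi> (- x)\<close>.\<close>
  have "(\<integral>\<^sup>+x. F x * indicator {\<phi> (- (- w))..\<phi> (- (- u))} x \<partial>lborel)
      = (\<integral>\<^sup>+x. F (\<phi> (- x)) * - D (- x) * indicator {- w..- u} x \<partial>lborel)"
  proof (rule nn_integral_substitution)
    show "((\<lambda>x. \<phi> (- x)) has_real_derivative - D (- x)) (at x)" if "x \<in> {- w..- u}" for x
    proof -
      have "(\<phi> has_real_derivative D (- x)) (at (- x))"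
        using that by (intro deriv) auto
      moreover have "(uminus has_real_derivative - 1) (at x)"
        by (auto intro!: derivative_eq_intros)
      ultimately show ?thesis
        using DERIV_chain2[where f = \<phi> and g = uminus] by fastforce
    qed
    show "continuous_on {- w..- u} (\<lambda>x. - D (- x))"
      by (intro continuous_intros continuous_on_compose2[OF cont]) auto
    show "set_borel_measurable borel {\<phi> (- (- w))..\<phi> (- (- u))} F"
      unfolding set_borel_measurable_def by measurable
  qed (use \<open>u \<le> w\<close> nonpos in auto)
  also have "\<dots> = (\<integral>\<^sup>+x. F (\<phi> x) * - D x * indicator {u..w} x \<partial>lborel)"
    using nn_integral_real_affine[of "\<lambda>x. ennreal (F (\<phi> x) * - D x * indicator {u..w} x)" "-1" 0]
    by (simp add: indicator_def minus_le_iff le_minus_iff conj_commute)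
  finally show ?thesis
    by simp
qed

lemma Icc_inverse_Suc_exhaustion:
  "incseq (\<lambda>i. {1 / real (Suc i)..real (Suc i)})" "(\<Union>i. {1 / real (Suc i)..real (Suc i)}) = {0<..}"
proof -
  show "incseq (\<lambda>i. {1 / real (Suc i)..real (Suc i)})"
    by (intro incseq_SucI) (auto simp: frac_le)
  have "\<exists>i. v \<in> {1 / real (Suc i)..real (Suc i)}" if "v > 0" for v
  proof -
    obtain i where "max v (1 / v) \<le> real i"
      using real_arch_simple by blast
    then have "max v (1 / v) \<le> real (Suc i)"
      by simp
    with that show ?thesis
      by (intro exI[of _ i]) (auto simp: field_simps)
  qed
  moreover have "0 < v" if "1 / real (Suc i) \<le> v" for v i
    using that by (simp add: less_le_trans[of 0 "1 / real (Suc i)"])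
  ultimately show "(\<Union>i. {1 / real (Suc i)..real (Suc i)}) = {0<..}"
    by auto
qed

lemma image_Icc_inverse_Suc_exhaustion:
  fixes \<phi> :: "real \<Rightarrow> real"
  assumes antitone: "\<And>v w. 0 < v \<Longrightarrow> v \<le> w \<Longrightarrow> \<phi> w \<le> \<phi> v"
    and img: "\<phi> ` {0<..} = {lo<..<hi}"
  shows "incseq (\<lambda>i. {\<phi> (real (Suc i))..\<phi> (1 / real (Suc i))})"
    "(\<Union>i. {\<phi> (real (Suc i))..\<phi> (1 / real (Suc i))}) = {lo<..<hi}"
proof -
  show "incseq (\<lambda>i. {\<phi> (real (Suc i))..\<phi> (1 / real (Suc i))})"
  proof (rule incseq_SucI)
    fix i
    have "\<phi> (real (Suc (Suc i))) \<le> \<phi> (real (Suc i))"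
      by (rule antitone) auto
    moreover have "\<phi> (1 / real (Suc i)) \<le> \<phi> (1 / real (Suc (Suc i)))"
      by (rule antitone) (auto simp: frac_le)
    ultimately show "{\<phi> (real (Suc i))..\<phi> (1 / real (Suc i))}
        \<subseteq> {\<phi> (real (Suc (Suc i)))..\<phi> (1 / real (Suc (Suc i)))}"
      by auto
  qed
  show "(\<Union>i. {\<phi> (real (Suc i))..\<phi> (1 / real (Suc i))}) = {lo<..<hi}"
  proof (intro equalityI subsetI)
    fix x assume "x \<in> (\<Union>i. {\<phi> (real (Suc i))..\<phi> (1 / real (Suc i))})"
    then obtain i where "x \<in> {\<phi> (real (Suc i))..\<phi> (1 / real (Suc i))}"
      by blast
    moreover have "\<phi> (real (Suc i)) \<in> {lo<..<hi}" "\<phi> (1 / real (Suc i)) \<in> {lo<..<hi}"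
      using img by auto
    ultimately show "x \<in> {lo<..<hi}"
      by auto
  next
    fix x assume "x \<in> {lo<..<hi}"
    then obtain v where v: "v > 0" "x = \<phi> v"
      using img by (metis greaterThan_iff imageE)
    then obtain i where "v \<in> {1 / real (Suc i)..real (Suc i)}"
      using Icc_inverse_Suc_exhaustion(2) by blast
    with v show "x \<in> (\<Union>i. {\<phi> (real (Suc i))..\<phi> (1 / real (Suc i))})"
      by (auto intro!: antitone)
  qed
qed

lemma nn_integral_substitution_antimono_pos:
  fixes \<phi> D F :: "real \<Rightarrow> real"
  assumes [measurable]: "(\<lambda>a. indicator {lo<..<hi} a * F a) \<in> borel_measurable borel"
      "\<phi> \<in> borel_measurable borel" "D \<in> borel_measurable borel"
    and deriv: "\<And>v. v > 0 \<Longrightarrow> (\<phi> has_real_derivative D v) (at v)"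
    and cont: "continuous_on {0<..} D" and nonpos: "\<And>v. v > 0 \<Longrightarrow> D v \<le> 0"
    and img: "\<phi> ` {0<..} = {lo<..<hi}"
  shows "(\<integral>\<^sup>+a. ennreal (indicator {lo<..<hi} a * F a) \<partial>lborel)
       = (\<integral>\<^sup>+v. ennreal (indicator {0<..} v * (F (\<phi> v) * - D v)) \<partial>lborel)"
proof -
  define Fi where "Fi a = indicator {lo<..<hi} a * F a" for a
  have [measurable]: "Fi \<in> borel_measurable borel"
    unfolding Fi_def by measurable
  define A where "A i = {1 / real (Suc i)..real (Suc i)}" for i
  define B where "B i = {\<phi> (real (Suc i))..\<phi> (1 / real (Suc i))}" for i
  have antitone: "\<phi> w \<le> \<phi> v" if "0 < v" "v \<le> w" for v w
    using \<open>v \<le> w\<close> by (rule DERIV_nonpos_imp_nonincreasing)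
      (metis \<open>0 < v\<close> deriv nonpos order_less_le_trans)
  note A = Icc_inverse_Suc_exhaustion[folded A_def]
  note B = image_Icc_inverse_Suc_exhaustion[OF antitone img, folded B_def]
  have "(\<integral>\<^sup>+a. ennreal (indicator {lo<..<hi} a * F a) \<partial>lborel)
      = (\<integral>\<^sup>+a. ennreal (Fi a) * indicator (\<Union>i. B i) a \<partial>lborel)"
    using B(2) unfolding Fi_def by (intro nn_integral_cong) (auto simp: indicator_def)
  also have "\<dots> = (SUP i. \<integral>\<^sup>+a. ennreal (Fi a) * indicator (B i) a \<partial>lborel)"
    by (rule nn_integral_indicator_incseq[OF B(1)]) (auto simp: B_def)
  also have "\<dots> = (SUP i. \<integral>\<^sup>+v. ennreal (Fi (\<phi> v) * - D v) * indicator (A i) v \<partial>lborel)"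
  proof (intro SUP_cong refl)
    fix i
    have "1 / real (Suc i) \<le> real (Suc i)"
      by (simp add: field_simps)
    moreover have "0 < v" if "1 / (1 + real i) \<le> v" for v
      using that by (smt (verit) divide_pos_pos of_nat_0_le_iff)
    ultimately have "(\<integral>\<^sup>+a. ennreal (Fi a * indicator (B i) a) \<partial>lborel)
        = (\<integral>\<^sup>+v. ennreal (Fi (\<phi> v) * - D v * indicator (A i) v) \<partial>lborel)"
      unfolding A_def B_def
      by (intro nn_integral_substitution_antimono)
         (auto intro!: deriv nonpos continuous_on_subset[OF cont])
    moreover have "ennreal (Fi a) * indicator (B i) a = ennreal (Fi a * indicator (B i) a)"
      "ennreal (Fi (\<phi> v) * - D v) * indicator (A i) v = ennreal (Fi (\<phi> v) * - D v * indicator (A i) v)"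
      for a v
      by (simp_all add: indicator_def)
    ultimately show "(\<integral>\<^sup>+a. ennreal (Fi a) * indicator (B i) a \<partial>lborel)
        = (\<integral>\<^sup>+v. ennreal (Fi (\<phi> v) * - D v) * indicator (A i) v \<partial>lborel)"
      by simp
  qed
  also have "\<dots> = (\<integral>\<^sup>+v. ennreal (Fi (\<phi> v) * - D v) * indicator (\<Union>i. A i) v \<partial>lborel)"
    by (rule nn_integral_indicator_incseq[OF A(1), symmetric]) (auto simp: A_def)
  also have "\<dots> = (\<integral>\<^sup>+v. ennreal (indicator {0<..} v * (F (\<phi> v) * - D v)) \<partial>lborel)"
    unfolding A(2) Fi_def using img by (intro nn_integral_cong) (auto simp: indicator_def)
  finally show ?thesis .
qed

definition shrinkage_sum :: "'i set \<Rightarrow> ('i \<Rightarrow> real) \<Rightarrow> real \<Rightarrow> real" where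
  "shrinkage_sum I a v = (\<Sum>k\<in>I. a k / (a k + 1 / v))"

definition shrinkage_sum_deriv :: "'i set \<Rightarrow> ('i \<Rightarrow> real) \<Rightarrow> real \<Rightarrow> real" where
  "shrinkage_sum_deriv I a v = (\<Sum>k\<in>I. a k / (a k * v + 1)\<^sup>2)"

lemma shrinkage_weight_eq: "v > 0 \<Longrightarrow> (a::real) / (a + 1 / v) = a * v / (a * v + 1)"
  by (simp add: field_simps)

lemma shrinkage_pos_less_1:
  fixes a v :: real assumes "a > 0" "v > 0"
  shows "0 < a / (a + 1 / v)" "a / (a + 1 / v) < 1"
  using assms by (simp_all add: shrinkage_weight_eq add_pos_pos)

locale positive_weights =
  fixes I :: "'i set" and a :: "'i \<Rightarrow> real"
  assumes I: "finite I" "I \<noteq> {}" and a_pos: "\<And>k. k \<in> I \<Longrightarrow> a k > 0"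
begin

lemma shrinkage_sum_pos: "v > 0 \<Longrightarrow> 0 < shrinkage_sum I a v"
  unfolding shrinkage_sum_def using I a_pos by (intro sum_pos shrinkage_pos_less_1) auto

lemma shrinkage_sum_less_card: "v > 0 \<Longrightarrow> shrinkage_sum I a v < real (card I)"
proof -
  assume "v > 0"
  then have "shrinkage_sum I a v < (\<Sum>k\<in>I. 1)"
    unfolding shrinkage_sum_def using I a_pos by (intro sum_strict_mono shrinkage_pos_less_1) auto
  then show ?thesis by simp
qed

lemma shrinkage_sum_strict_mono: "0 < v \<Longrightarrow> v < w \<Longrightarrow> shrinkage_sum I a v < shrinkage_sum I a w"
  unfolding shrinkage_sum_def using I a_pos
  by (intro sum_strict_mono) (auto intro!: divide_strict_left_mono add_pos_pos mult_pos_pos simp: frac_less2)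

lemma shrinkage_sum_has_derivative:
  "v > 0 \<Longrightarrow> (shrinkage_sum I a has_real_derivative shrinkage_sum_deriv I a v) (at v)"
  unfolding shrinkage_sum_def[abs_def] shrinkage_sum_deriv_def
proof (rule DERIV_sum)
  fix k assume "v > 0" "k \<in> I"
  then have "a k + 1 / v > 0" "a k * v + 1 > 0"
    using a_pos by (auto intro: add_pos_pos)
  then have "a k + 1 / v \<noteq> 0" "a k * v + 1 \<noteq> 0"
    by auto
  with \<open>v > 0\<close> show "((\<lambda>x. a k / (a k + 1 / x)) has_real_derivative a k / (a k * v + 1)\<^sup>2) (at v)"
    by (auto intro!: derivative_eq_intros simp: field_simps power2_eq_square)
qed

lemma shrinkage_sum_surj:
  assumes "0 < t" "t < real (card I)"
  shows "\<exists>v>0. shrinkage_sum I a v = t"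
proof -
  define v1 where "v1 = t / (\<Sum>k\<in>I. a k)"
  define v2 where "v2 = max v1 ((\<Sum>k\<in>I. 1 / a k) / (real (card I) - t))"
  have "(\<Sum>k\<in>I. a k) > 0" "(\<Sum>k\<in>I. 1 / a k) > 0"
    using I a_pos by (auto intro!: sum_pos)
  then have v1: "v1 > 0"
    using assms unfolding v1_def by simp
  then have v2: "v1 \<le> v2" "v2 > 0"
    unfolding v2_def by auto
  have "shrinkage_sum I a v1 \<le> (\<Sum>k\<in>I. a k * v1)"
    unfolding shrinkage_sum_def using a_pos v1
    by (intro sum_mono) (simp add: shrinkage_weight_eq divide_le_eq add_pos_pos less_imp_le)
  also have "\<dots> = t"
    unfolding v1_def sum_distrib_right[symmetric] using \<open>(\<Sum>k\<in>I. a k) > 0\<close> by simp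
  finally have T1: "shrinkage_sum I a v1 \<le> t" .
  have "real (card I) - (\<Sum>k\<in>I. 1 / a k) / v2 = (\<Sum>k\<in>I. 1 - 1 / (a k * v2))"
    by (simp add: sum_subtractf sum_divide_distrib)
  also have "\<dots> \<le> shrinkage_sum I a v2"
    unfolding shrinkage_sum_def
  proof (intro sum_mono)
    fix k assume "k \<in> I"
    then have "a k * v2 > 0"
      using a_pos v2 by simp
    then show "1 - 1 / (a k * v2) \<le> a k / (a k + 1 / v2)"
      using v2 by (simp add: shrinkage_weight_eq field_simps)
  qed
  finally have "real (card I) - (\<Sum>k\<in>I. 1 / a k) / v2 \<le> shrinkage_sum I a v2" .
  moreover have "(\<Sum>k\<in>I. 1 / a k) / v2 \<le> real (card I) - t"
  proof -
    have "(\<Sum>k\<in>I. 1 / a k) / (real (card I) - t) \<le> v2"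
      unfolding v2_def by simp
    then show ?thesis
      using v2 assms by (simp add: field_simps)
  qed
  ultimately have T2: "t \<le> shrinkage_sum I a v2"
    by linarith
  have "\<forall>v. v1 \<le> v \<and> v \<le> v2 \<longrightarrow> isCont (shrinkage_sum I a) v"
    using v1 by (metis DERIV_isCont shrinkage_sum_has_derivative order_less_le_trans)
  then obtain v where "v1 \<le> v" "shrinkage_sum I a v = t"
    using IVT[OF T1 T2 \<open>v1 \<le> v2\<close>] by blast
  with v1 show ?thesis
    by (intro exI[of _ v]) auto
qed

end

section \<open>Power priors of normal likelihoods\<close>

lemma sum_sq_dev_mean:
  fixes x :: "nat \<Rightarrow> real" assumes "m \<ge> 1"
  shows "(\<Sum>i=1..m. (x i - \<theta>)\<^sup>2)
       = real m * (mean m x - \<theta>)\<^sup>2 + ((\<Sum>i=1..m. (x i)\<^sup>2) - real m * (mean m x)\<^sup>2)"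
proof -
  have sum_x: "(\<Sum>i=1..m. x i) = real m * mean m x"
    using assms unfolding mean_def by simp
  have "(\<Sum>i=1..m. (x i - \<theta>)\<^sup>2) = (\<Sum>i=1..m. (x i)\<^sup>2) - 2 * \<theta> * (\<Sum>i=1..m. x i) + real m * \<theta>\<^sup>2"
    by (simp add: power2_diff sum.distrib sum_subtractf sum_distrib_left mult_ac)
  then show ?thesis
    unfolding sum_x by (simp add: power2_eq_square algebra_simps)
qed

lemma Lk_powr_gaussian:
  assumes n0: "n0 k \<ge> 1" and s0: "s0 k > 0"
  shows "\<exists>w>0. \<forall>\<theta>. Lk n0 s0 y0 k \<theta> powr h
           = w * exp (- (h * (real (n0 k) / s0 k)) * (mean (n0 k) (y0 k) - \<theta>)\<^sup>2 / 2)"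
proof (intro exI conjI allI)
  define R where "R = (\<Sum>i=1..n0 k. (y0 k i)\<^sup>2) - real (n0 k) * (mean (n0 k) (y0 k))\<^sup>2"
  define w where "w = (sqrt (s0 k) powr - real (n0 k)) powr h * exp (- h * R / (2 * s0 k))"
  show "w > 0"
    unfolding w_def using s0 by simp
  fix \<theta>
  have exponent: "- (1 / (2 * s0 k)) * (\<Sum>i=1..n0 k. (y0 k i - \<theta>)\<^sup>2) * h
      = - h * R / (2 * s0 k) + - (h * (real (n0 k) / s0 k)) * (mean (n0 k) (y0 k) - \<theta>)\<^sup>2 / 2"
    unfolding sum_sq_dev_mean[OF n0] R_def using s0 by (simp add: field_simps)
  show "Lk n0 s0 y0 k \<theta> powr h
      = w * exp (- (h * (real (n0 k) / s0 k)) * (mean (n0 k) (y0 k) - \<theta>)\<^sup>2 / 2)"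
    unfolding Lk_def powr_mult exp_powr_real w_def exponent exp_add by (simp only: mult.assoc)
qed

lemma sum_neg_quadratic:
  fixes c m :: "'i \<Rightarrow> real"
  shows "(\<Sum>k\<in>I. - c k * (m k - \<theta>)\<^sup>2 / 2)
       = - (\<Sum>k\<in>I. c k) * \<theta>\<^sup>2 / 2 + (\<Sum>k\<in>I. c k * m k) * \<theta> - (\<Sum>k\<in>I. c k * (m k)\<^sup>2) / 2"
proof -
  have "- c k * (m k - \<theta>)\<^sup>2 / 2 = - c k * \<theta>\<^sup>2 / 2 + c k * m k * \<theta> - c k * (m k)\<^sup>2 / 2" for k
    by (simp add: power2_eq_square field_simps)
  then show ?thesis
    by (simp add: sum.distrib sum_subtractf sum_distrib_right sum_divide_distrib)
qed

text \<open>The kernel of the posterior of \<open>\<theta>\<close> given \<open>v\<close>, common to both models.\<close>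

definition cond_post_kernel ::
    "nat \<Rightarrow> (nat \<Rightarrow> nat) \<Rightarrow> (nat \<Rightarrow> real) \<Rightarrow> (nat \<Rightarrow> nat \<Rightarrow> real) \<Rightarrow> nat \<Rightarrow> real \<Rightarrow> (nat \<Rightarrow> real)
      \<Rightarrow> real \<Rightarrow> real \<Rightarrow> real" where
  "cond_post_kernel K n0 s0 y0 n s y \<theta> v =
     exp (- real n * (mean n y - \<theta>)\<^sup>2 / (2 * s)
          - fK K n0 s0 v * Cc K n0 s0 v * \<theta>\<^sup>2 / 2
          + fK K n0 s0 v * (\<Sum>k=1..K. Nk n0 s0 v k * Yk n0 s0 y0 k) / v * \<theta>)"

lemma measurable_cond_post_kernel [measurable]:
  "cond_post_kernel K n0 s0 y0 n s y \<theta> \<in> borel_measurable borel"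
  unfolding cond_post_kernel_def fK_def Cc_def Nk_def Yk_def by measurable

lemma measurable_cond_post_kernel_prod [measurable]:
  "(\<lambda>(\<theta>, v). cond_post_kernel K n0 s0 y0 n s y \<theta> v) \<in> borel_measurable (borel \<Otimes>\<^sub>M borel)"
  unfolding cond_post_kernel_def fK_def Cc_def Nk_def Yk_def by measurable

lemma measurable_Qf [measurable]: "Qf K n0 s0 y0 \<in> borel_measurable borel"
  unfolding Qf_def fK_def Cc_def Nk_def Yk_def by measurable

lemma measurable_Rf [measurable]: "Rf K n0 s0 y0 \<in> borel_measurable borel"
  unfolding Rf_def Aa_def Nk_def Yk_def by measurable

section \<open>The map \<open>f\<close> and the discounting functions\<close>

locale historical_data =
  fixes K :: nat and n0 :: "nat \<Rightarrow> nat" and s0 :: "nat \<Rightarrow> real"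
  assumes K_pos: "K \<ge> 1"
    and n0_pos: "\<And>k. k \<in> {1..K} \<Longrightarrow> n0 k \<ge> 1"
    and s0_pos: "\<And>k. k \<in> {1..K} \<Longrightarrow> s0 k > 0"
begin

definition prec :: "nat \<Rightarrow> real" where
  "prec k = real (n0 k) / s0 k"

lemma prec_pos: "k \<in> {1..K} \<Longrightarrow> prec k > 0"
  unfolding prec_def using n0_pos s0_pos by (simp add: Suc_le_eq)

sublocale positive_weights "{1..K}" prec
  using K_pos prec_pos by unfold_locales auto

abbreviation shrink :: "real \<Rightarrow> real" where
  "shrink \<equiv> shrinkage_sum {1..K} prec"

definition fK' :: "real \<Rightarrow> real" where
  "fK' v = - shrinkage_sum_deriv {1..K} prec v / (1 + shrink v)\<^sup>2"

definition fK_inv :: "real \<Rightarrow> real" where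
  "fK_inv = inv_into {0<..} (fK K n0 s0)"

lemma fK_eq: "fK K n0 s0 v = inverse (1 + shrink v)"
  by (simp add: fK_def shrinkage_sum_def prec_def)

lemma fK_mem: "v > 0 \<Longrightarrow> fK K n0 s0 v \<in> {1 / (real K + 1)<..<1}"
  using shrinkage_sum_pos[of v] shrinkage_sum_less_card[of v]
  by (auto simp: fK_eq field_simps)

lemma fK_pos: "v > 0 \<Longrightarrow> fK K n0 s0 v > 0"
  using shrinkage_sum_pos[of v] by (simp add: fK_eq)

lemma fK_strict_antimono: "0 < v \<Longrightarrow> v < w \<Longrightarrow> fK K n0 s0 w < fK K n0 s0 v"
  using shrinkage_sum_strict_mono[of v w] shrinkage_sum_pos[of v]
  by (simp add: fK_eq)

lemma fK_inj: "inj_on (fK K n0 s0) {0<..}"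
  by (intro inj_onI) (metis fK_strict_antimono greaterThan_iff linorder_neqE_linordered_idom less_irrefl)

lemma fK_image: "fK K n0 s0 ` {0<..} = {1 / (real K + 1)<..<1}"
proof (intro equalityI subsetI)
  fix a0 assume a0: "a0 \<in> {1 / (real K + 1)<..<1}"
  then have "a0 > 0"
    by (auto intro: less_trans[of 0 "1 / (real K + 1)"])
  then obtain v where "v > 0" "shrink v = 1 / a0 - 1"
    using a0 shrinkage_sum_surj[of "1 / a0 - 1"] by (auto simp: field_simps)
  with \<open>a0 > 0\<close> show "a0 \<in> fK K n0 s0 ` {0<..}"
    by (intro image_eqI[of _ _ v]) (auto simp: fK_eq)
qed (use fK_mem in blast)

lemma fK_has_derivative:
  assumes "v > 0" shows "(fK K n0 s0 has_real_derivative fK' v) (at v)"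
proof -
  have "((\<lambda>x. 1 + shrink x) has_real_derivative shrinkage_sum_deriv {1..K} prec v) (at v)"
    using shrinkage_sum_has_derivative[OF assms] by (auto intro!: derivative_eq_intros)
  from DERIV_inverse_fun[OF this] show ?thesis
    using shrinkage_sum_pos[OF assms]
    by (simp add: fK_eq[abs_def] fK'_def power2_eq_square divide_inverse inverse_mult_distrib)
qed

lemma fK'_nonpos: "v > 0 \<Longrightarrow> fK' v \<le> 0"
  unfolding fK'_def shrinkage_sum_deriv_def
  by (auto intro!: sum_nonneg divide_nonneg_nonneg less_imp_le[OF prec_pos])

lemma abs_deriv_fK: "v > 0 \<Longrightarrow> \<bar>deriv (fK K n0 s0) v\<bar> = - fK' v"
  using DERIV_imp_deriv[OF fK_has_derivative] fK'_nonpos by simp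

lemma continuous_on_fK': "continuous_on {0<..} fK'"
proof -
  have "prec k * v + 1 \<noteq> 0" "prec k + 1 / v \<noteq> 0" if "k \<in> {1..K}" "v > 0" for k v
    using prec_pos[OF that(1)] that(2) by (auto simp: add_pos_pos intro!: less_imp_neq[symmetric])
  moreover have "1 + shrink v \<noteq> 0" if "v > 0" for v
    using shrinkage_sum_pos[OF that] by simp
  ultimately show ?thesis
    unfolding fK'_def shrinkage_sum_deriv_def shrinkage_sum_def
    by (intro continuous_intros) auto
qed

lemma measurable_fK' [measurable]: "fK' \<in> borel_measurable borel"
  unfolding fK'_def shrinkage_sum_deriv_def shrinkage_sum_def by measurable

lemma measurable_fK [measurable]: "fK K n0 s0 \<in> borel_measurable borel"
  unfolding fK_def by measurable

lemma fK_inv_pos: "a0 \<in> {1 / (real K + 1)<..<1} \<Longrightarrow> fK_inv a0 > 0"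
  unfolding fK_inv_def using inv_into_into[of a0 "fK K n0 s0" "{0<..}"] fK_image by auto

lemma fK_fK_inv: "a0 \<in> {1 / (real K + 1)<..<1} \<Longrightarrow> fK K n0 s0 (fK_inv a0) = a0"
  unfolding fK_inv_def using f_inv_into_f[of a0 "fK K n0 s0" "{0<..}"] fK_image by auto

lemma fK_inv_fK: "v > 0 \<Longrightarrow> fK_inv (fK K n0 s0 v) = v"
  unfolding fK_inv_def using inv_into_f_f[OF fK_inj, of v] by simp

lemma measurable_fK_inv [measurable]:
  "fK_inv \<in> borel_measurable (restrict_space borel {1 / (real K + 1)<..<1})"
proof -
  have "mono_on {1 / (real K + 1)<..<1} (\<lambda>a. - fK_inv a)"
  proof (rule mono_onI)
    fix a b assume ab: "a \<in> {1 / (real K + 1)<..<1}" "b \<in> {1 / (real K + 1)<..<1}" "a \<le> b"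
    show "- fK_inv a \<le> - fK_inv b"
    proof (rule ccontr)
      assume "\<not> - fK_inv a \<le> - fK_inv b"
      then have "fK K n0 s0 (fK_inv b) < fK K n0 s0 (fK_inv a)"
        using ab by (intro fK_strict_antimono fK_inv_pos) auto
      with ab show False
        by (simp add: fK_fK_inv)
    qed
  qed
  from borel_measurable_mono_on_fnc[OF this]
  have "(\<lambda>a. - (- fK_inv a)) \<in> borel_measurable (restrict_space borel {1 / (real K + 1)<..<1})"
    by measurable
  then show ?thesis
    by simp
qed

lemma hk_eq: "hk K n0 s0 k a0 = a0 / (1 + prec k * fK_inv a0)"
  by (simp add: hk_def fK_inv_def prec_def divide_inverse mult_ac)

lemma hk_bounds:
  assumes a0: "a0 \<in> {1 / (real K + 1)<..<1}" and k: "k \<in> {1..K}"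
  shows "0 < hk K n0 s0 k a0 \<and> hk K n0 s0 k a0 < 1"
proof -
  have "a0 > 0" "a0 < 1"
    using a0 by (auto intro: less_trans[of 0 "1 / (real K + 1)"])
  moreover have "prec k * fK_inv a0 > 0"
    using prec_pos[OF k] fK_inv_pos[OF a0] by simp
  ultimately show ?thesis
    unfolding hk_eq by (simp add: divide_less_eq)
qed

lemma Nk_eq: "Nk n0 s0 v k = inverse (prec k + 1 / v)"
  by (simp add: Nk_def prec_def)

lemma Nk_pos: "v > 0 \<Longrightarrow> k \<in> {1..K} \<Longrightarrow> Nk n0 s0 v k > 0"
  unfolding Nk_eq using prec_pos by (simp add: add_pos_pos)

lemma Nk_eq_div: "v > 0 \<Longrightarrow> Nk n0 s0 v k = v / (prec k * v + 1)"
  unfolding Nk_eq by (simp add: field_simps)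

lemma Cc_eq: "v > 0 \<Longrightarrow> Cc K n0 s0 v = shrink v / v"
  unfolding Cc_def shrinkage_sum_def sum_divide_distrib
  by (intro sum.cong refl) (simp add: Nk_eq prec_def divide_inverse mult_ac)

lemma Cc_pos: "v > 0 \<Longrightarrow> Cc K n0 s0 v > 0"
  using shrinkage_sum_pos by (simp add: Cc_eq)

lemma Aa_eq: "v > 0 \<Longrightarrow> Aa K n0 s0 v = (1 + shrink v) / v"
proof -
  assume v: "v > 0"
  have "Nk n0 s0 v k / v\<^sup>2 = (1 - prec k / (prec k + 1 / v)) / v" if "k \<in> {1..K}" for k
  proof -
    have "prec k * v + 1 > 0"
      using v prec_pos[OF that] by (simp add: add_pos_pos)
    then have "1 - prec k / (prec k + 1 / v) = 1 / (prec k * v + 1)"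
      using v by (simp add: shrinkage_weight_eq field_simps)
    moreover have "Nk n0 s0 v k / v\<^sup>2 = 1 / (prec k * v + 1) / v"
      using v by (simp add: Nk_eq_div power2_eq_square)
    ultimately show ?thesis
      by simp
  qed
  then have "(\<Sum>k=1..K. Nk n0 s0 v k) / v\<^sup>2 = (real K - shrink v) / v"
    unfolding sum_divide_distrib shrinkage_sum_def
    by (simp add: sum_subtractf diff_divide_distrib[symmetric] sum_divide_distrib[symmetric])
  then show ?thesis
    unfolding Aa_def by (simp add: diff_divide_distrib[symmetric])
qed

lemma hk_fK_prec:
  assumes "v > 0" "k \<in> {1..K}"
  shows "hk K n0 s0 k (fK K n0 s0 v) * prec k = fK K n0 s0 v * (prec k * Nk n0 s0 v k / v)"
proof -
  have "prec k * v + 1 > 0"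
    using assms prec_pos by (simp add: add_pos_pos)
  have "hk K n0 s0 k (fK K n0 s0 v) * prec k = fK K n0 s0 v * prec k / (prec k * v + 1)"
    using assms by (simp add: hk_eq fK_inv_fK add.commute)
  also have "\<dots> = fK K n0 s0 v * (prec k * Nk n0 s0 v k / v)"
    using assms \<open>prec k * v + 1 > 0\<close> by (simp add: Nk_eq_div)
  finally show ?thesis .
qed

section \<open>The BNPP as a mixture over \<open>v\<close>\<close>

lemma prod_Lk_powr_gaussian:
  "\<exists>W>0. \<forall>\<theta>. (\<Prod>k=1..K. Lk n0 s0 y0 k \<theta> powr h k)
     = W * exp (- (\<Sum>k=1..K. h k * prec k) * \<theta>\<^sup>2 / 2
                + (\<Sum>k=1..K. h k * prec k * mean (n0 k) (y0 k)) * \<theta>)"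
proof -
  define m where "m k = mean (n0 k) (y0 k)" for k
  have "\<forall>k\<in>{1..K}. \<exists>w>0. \<forall>\<theta>. Lk n0 s0 y0 k \<theta> powr h k
          = w * exp (- (h k * prec k) * (m k - \<theta>)\<^sup>2 / 2)"
    unfolding prec_def m_def using n0_pos s0_pos by (blast intro: Lk_powr_gaussian)
  then obtain w where w: "\<And>k. k \<in> {1..K} \<Longrightarrow> w k > 0"
    and Lk: "\<And>k \<theta>. k \<in> {1..K} \<Longrightarrow> Lk n0 s0 y0 k \<theta> powr h k
               = w k * exp (- (h k * prec k) * (m k - \<theta>)\<^sup>2 / 2)"
    by metis
  define W where "W = (\<Prod>k=1..K. w k) * exp (- (\<Sum>k=1..K. h k * prec k * (m k)\<^sup>2) / 2)"
  show ?thesis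
  proof (intro exI conjI allI)
    show "W > 0"
      unfolding W_def using w by (intro mult_pos_pos prod_pos) auto
    fix \<theta>
    have "(\<Prod>k=1..K. Lk n0 s0 y0 k \<theta> powr h k)
        = (\<Prod>k=1..K. w k) * exp (\<Sum>k=1..K. - (h k * prec k) * (m k - \<theta>)\<^sup>2 / 2)"
      by (simp add: Lk exp_sum prod.distrib)
    also have "\<dots> = W * exp (- (\<Sum>k=1..K. h k * prec k) * \<theta>\<^sup>2 / 2
                              + (\<Sum>k=1..K. h k * prec k * m k) * \<theta>)"
      unfolding sum_neg_quadratic W_def mult.assoc by (simp add: exp_add[symmetric] algebra_simps)
    finally show "(\<Prod>k=1..K. Lk n0 s0 y0 k \<theta> powr h k)
        = W * exp (- (\<Sum>k=1..K. h k * prec k) * \<theta>\<^sup>2 / 2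
                   + (\<Sum>k=1..K. h k * prec k * mean (n0 k) (y0 k)) * \<theta>)"
      unfolding m_def .
  qed
qed

lemma power_prior_normalized:
  fixes y0 :: "nat \<Rightarrow> nat \<Rightarrow> real" and v \<theta> :: real
  assumes v: "v > 0"
  defines "f \<equiv> fK K n0 s0 v" and "C \<equiv> Cc K n0 s0 v" and "S \<equiv> \<Sum>k=1..K. Nk n0 s0 v k * Yk n0 s0 y0 k"
  shows "(\<Prod>k=1..K. Lk n0 s0 y0 k \<theta> powr hk K n0 s0 k f) / cnorm K n0 s0 y0 f
       = Qf K n0 s0 y0 v / sqrt (2 * pi) * exp (- f * C * \<theta>\<^sup>2 / 2 + f * S / v * \<theta>)"
proof -
  have fC: "f > 0" "C > 0"
    unfolding f_def C_def using fK_pos Cc_pos v by auto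
  have P: "(\<Sum>k=1..K. hk K n0 s0 k f * prec k) = f * C"
    unfolding C_def Cc_def sum_distrib_left f_def
  proof (intro sum.cong refl)
    fix k assume "k \<in> {1..K}"
    from hk_fK_prec[OF v this] show "hk K n0 s0 k (fK K n0 s0 v) * prec k
        = fK K n0 s0 v * (real (n0 k) * Nk n0 s0 v k / (v * s0 k))"
      by (simp add: prec_def mult_ac)
  qed
  have B: "(\<Sum>k=1..K. hk K n0 s0 k f * prec k * mean (n0 k) (y0 k)) = f * S / v"
    unfolding S_def sum_distrib_left sum_divide_distrib f_def
  proof (intro sum.cong refl)
    fix k assume "k \<in> {1..K}"
    from hk_fK_prec[OF v this] show "hk K n0 s0 k (fK K n0 s0 v) * prec k * mean (n0 k) (y0 k)
        = fK K n0 s0 v * (Nk n0 s0 v k * Yk n0 s0 y0 k) / v"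
      by (simp add: Yk_def prec_def mult_ac)
  qed
  obtain W where "W > 0" and prod: "\<And>\<theta>. (\<Prod>k=1..K. Lk n0 s0 y0 k \<theta> powr hk K n0 s0 k f)
      = W * exp (- (f * C) * \<theta>\<^sup>2 / 2 + (f * S / v) * \<theta>)"
    using prod_Lk_powr_gaussian[of y0 "\<lambda>k. hk K n0 s0 k f"] unfolding P B by blast
  define X where "X = - (f * C) * \<theta>\<^sup>2 / 2 + (f * S / v) * \<theta>"
  define D where "D = f / (2 * C) * (1 / v * S)\<^sup>2"
  have D_eq: "(f * S / v)\<^sup>2 / (2 * (f * C)) = D"
    unfolding D_def using fC by (simp add: power2_eq_square field_simps)
  have "(\<Prod>k=1..K. Lk n0 s0 y0 k \<theta> powr hk K n0 s0 k f) / cnorm K n0 s0 y0 f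
      = exp (X - (f * S / v)\<^sup>2 / (2 * (f * C))) / sqrt (2 * pi / (f * C))"
    unfolding cnorm_def X_def using fC \<open>W > 0\<close> prod by (intro gaussian_kernel_normalized) auto
  also have "\<dots> = exp (- D) * sqrt (f * C) / sqrt (2 * pi) * exp X"
    unfolding D_eq using fC by (simp add: exp_diff exp_minus real_sqrt_divide field_simps)
  finally show ?thesis
    unfolding Qf_def X_def D_def f_def[symmetric] C_def[symmetric] S_def[symmetric] by simp
qed

lemma bnpp_integrand_eq:
  fixes y0 :: "nat \<Rightarrow> nat \<Rightarrow> real" and y :: "nat \<Rightarrow> real"
  assumes n: "n \<ge> 1" and a: "a \<in> {1 / (real K + 1)<..<1}"
  shows "exp (- (1 / (2 * s)) * (\<Sum>i=1..n. (y i - \<theta>)\<^sup>2))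
           * (\<Prod>k=1..K. Lk n0 s0 y0 k \<theta> powr hk K n0 s0 k a) / cnorm K n0 s0 y0 a * pia a
       = exp (- ((\<Sum>i=1..n. (y i)\<^sup>2) - real n * (mean n y)\<^sup>2) / (2 * s)) / sqrt (2 * pi)
           * (Qf K n0 s0 y0 (fK_inv a) * pia a * cond_post_kernel K n0 s0 y0 n s y \<theta> (fK_inv a))"
proof -
  have v: "fK_inv a > 0" and fa: "fK K n0 s0 (fK_inv a) = a"
    using a by (auto intro: fK_inv_pos fK_fK_inv)
  have data: "exp (- (1 / (2 * s)) * (\<Sum>i=1..n. (y i - \<theta>)\<^sup>2))
      = exp (- ((\<Sum>i=1..n. (y i)\<^sup>2) - real n * (mean n y)\<^sup>2) / (2 * s))
        * exp (- real n * (mean n y - \<theta>)\<^sup>2 / (2 * s))"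
    unfolding sum_sq_dev_mean[OF n] exp_add[symmetric] by (cases "s = 0") (simp_all add: field_simps)
  have prior: "(\<Prod>k=1..K. Lk n0 s0 y0 k \<theta> powr hk K n0 s0 k a) / cnorm K n0 s0 y0 a
      = Qf K n0 s0 y0 (fK_inv a) / sqrt (2 * pi)
        * exp (- a * Cc K n0 s0 (fK_inv a) * \<theta>\<^sup>2 / 2
               + a * (\<Sum>k=1..K. Nk n0 s0 (fK_inv a) k * Yk n0 s0 y0 k) / fK_inv a * \<theta>)"
    using power_prior_normalized[OF v, of y0 \<theta>] unfolding fa .
  have cond: "cond_post_kernel K n0 s0 y0 n s y \<theta> (fK_inv a)
      = exp (- real n * (mean n y - \<theta>)\<^sup>2 / (2 * s))
        * exp (- a * Cc K n0 s0 (fK_inv a) * \<theta>\<^sup>2 / 2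
               + a * (\<Sum>k=1..K. Nk n0 s0 (fK_inv a) k * Yk n0 s0 y0 k) / fK_inv a * \<theta>)"
    unfolding cond_post_kernel_def fa by (simp add: exp_add[symmetric] algebra_simps)
  have "exp (- (1 / (2 * s)) * (\<Sum>i=1..n. (y i - \<theta>)\<^sup>2))
           * (\<Prod>k=1..K. Lk n0 s0 y0 k \<theta> powr hk K n0 s0 k a) / cnorm K n0 s0 y0 a * pia a
      = exp (- (1 / (2 * s)) * (\<Sum>i=1..n. (y i - \<theta>)\<^sup>2))
           * ((\<Prod>k=1..K. Lk n0 s0 y0 k \<theta> powr hk K n0 s0 k a) / cnorm K n0 s0 y0 a) * pia a"
    by simp
  then show ?thesis
    unfolding data prior cond by (simp add: mult_ac)
qed

lemma bnpp_kernel_mixture: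
  fixes y0 :: "nat \<Rightarrow> nat \<Rightarrow> real" and y :: "nat \<Rightarrow> real" and pia :: "real \<Rightarrow> real"
  assumes n: "n \<ge> 1" and [measurable]: "pia \<in> borel_measurable borel"
  shows "\<exists>\<kappa>>0. \<forall>\<theta>. bnpp_kernel K n0 s0 y0 n s y pia \<theta> = ennreal \<kappa> *
           (\<integral>\<^sup>+v. indicator {0<..} v * ennreal (Qf K n0 s0 y0 v * \<bar>deriv (fK K n0 s0) v\<bar>
              * pia (fK K n0 s0 v) * cond_post_kernel K n0 s0 y0 n s y \<theta> v) \<partial>lborel)"
proof (intro exI conjI allI)
  define J where "J = {1 / (real K + 1)<..<1}"
  define \<kappa> where "\<kappa> = exp (- ((\<Sum>i=1..n. (y i)\<^sup>2) - real n * (mean n y)\<^sup>2) / (2 * s)) / sqrt (2 * pi)"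
  show "\<kappa> > 0"
    unfolding \<kappa>_def by simp
  fix \<theta>
  define F where "F a = Qf K n0 s0 y0 (fK_inv a) * pia a * cond_post_kernel K n0 s0 y0 n s y \<theta> (fK_inv a)"
    for a
  have "F \<in> borel_measurable (restrict_space borel J)"
    unfolding F_def J_def by measurable (auto intro: measurable_restrict_space1)
  then have F_meas [measurable]: "(\<lambda>a. indicator J a * F a) \<in> borel_measurable borel"
    by (subst (asm) borel_measurable_restrict_space_iff) (auto simp: J_def)
  have "bnpp_kernel K n0 s0 y0 n s y pia \<theta> = (\<integral>\<^sup>+a. ennreal \<kappa> * ennreal (indicator J a * F a) \<partial>lborel)"
    unfolding bnpp_kernel_def
  proof (intro nn_integral_cong)
    fix a
    show "indicator {1 / (real K + 1)<..<1} a * ennreal (exp (- (1 / (2 * s)) * (\<Sum>i=1..n. (y i - \<theta>)\<^sup>2))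
        * (\<Prod>k=1..K. Lk n0 s0 y0 k \<theta> powr hk K n0 s0 k a) / cnorm K n0 s0 y0 a * pia a)
      = ennreal \<kappa> * ennreal (indicator J a * F a)"
    proof (cases "a \<in> J")
      case True
      then show ?thesis
        unfolding bnpp_integrand_eq[OF n True[unfolded J_def]] \<kappa>_def[symmetric] F_def[symmetric]
        using \<open>\<kappa> > 0\<close> by (simp add: J_def ennreal_mult')
    qed (simp add: J_def)
  qed
  also have "\<dots> = ennreal \<kappa> * (\<integral>\<^sup>+a. ennreal (indicator J a * F a) \<partial>lborel)"
    by (rule nn_integral_cmult) measurable
  also have "(\<integral>\<^sup>+a. ennreal (indicator J a * F a) \<partial>lborel)
      = (\<integral>\<^sup>+v. ennreal (indicator {0<..} v * (F (fK K n0 s0 v) * - fK' v)) \<partial>lborel)"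
    unfolding J_def
    by (rule nn_integral_substitution_antimono_pos)
       (use F_meas[unfolded J_def] fK_has_derivative continuous_on_fK' fK'_nonpos fK_image in auto)
  also have "\<dots> = (\<integral>\<^sup>+v. indicator {0<..} v * ennreal (Qf K n0 s0 y0 v * \<bar>deriv (fK K n0 s0) v\<bar>
              * pia (fK K n0 s0 v) * cond_post_kernel K n0 s0 y0 n s y \<theta> v) \<partial>lborel)"
    by (intro nn_integral_cong)
       (simp add: F_def fK_inv_fK abs_deriv_fK indicator_mult_ennreal mult_ac split: split_indicator)
  finally show "bnpp_kernel K n0 s0 y0 n s y pia \<theta> = ennreal \<kappa> *
           (\<integral>\<^sup>+v. indicator {0<..} v * ennreal (Qf K n0 s0 y0 v * \<bar>deriv (fK K n0 s0) v\<bar>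
              * pia (fK K n0 s0 v) * cond_post_kernel K n0 s0 y0 n s y \<theta> v) \<partial>lborel)" .
qed

section \<open>The BHM as a mixture over \<open>v\<close>\<close>

lemma bhm_theta0_integral:
  fixes y0 :: "nat \<Rightarrow> nat \<Rightarrow> real"
  assumes v: "v > 0" and c: "c \<ge> 0"
  shows "(\<integral>\<^sup>+\<theta>0. ennreal (c * exp (X
            - (1 / 2) * (\<Sum>k=1..K. real (n0 k) * (mean (n0 k) (y0 k) - \<theta>0 k)\<^sup>2 / s0 k)
            - (\<theta> - \<mu>)\<^sup>2 / (2 * v)
            - (1 / (2 * v)) * (\<Sum>k=1..K. (\<theta>0 k - \<mu>)\<^sup>2))) \<partial>PiM {1..K} (\<lambda>_. lborel))
       = ennreal (c * exp (X - (\<theta> - \<mu>)\<^sup>2 / (2 * v)) * (\<Prod>k=1..K.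
           sqrt (2 * pi / (prec k + 1 / v)) * exp ((Yk n0 s0 y0 k + \<mu> / v)\<^sup>2 / (2 * (prec k + 1 / v))
             + (- (prec k * (mean (n0 k) (y0 k))\<^sup>2) / 2 - \<mu>\<^sup>2 / (2 * v)))))"
proof -
  define m where "m k = mean (n0 k) (y0 k)" for k
  define p where "p k = prec k + 1 / v" for k
  define b where "b k = Yk n0 s0 y0 k + \<mu> / v" for k
  define d where "d k = - (prec k * (m k)\<^sup>2) / 2 - \<mu>\<^sup>2 / (2 * v)" for k
  have p: "p k > 0" if "k \<in> {1..K}" for k
    unfolding p_def using prec_pos[OF that] v by (simp add: add_pos_pos)
  have coord: "- (1 / 2) * (real (n0 k) * (m k - t)\<^sup>2 / s0 k) - (1 / (2 * v)) * (t - \<mu>)\<^sup>2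
      = - p k * t\<^sup>2 / 2 + b k * t + d k" if "k \<in> {1..K}" for k t
    unfolding p_def b_def d_def prec_def Yk_def m_def[symmetric]
    using s0_pos[OF that] v by (simp add: power2_eq_square field_simps)
  have exponent: "X - (1 / 2) * (\<Sum>k=1..K. real (n0 k) * (m k - \<theta>0 k)\<^sup>2 / s0 k)
        - (\<theta> - \<mu>)\<^sup>2 / (2 * v) - (1 / (2 * v)) * (\<Sum>k=1..K. (\<theta>0 k - \<mu>)\<^sup>2)
      = (X - (\<theta> - \<mu>)\<^sup>2 / (2 * v)) + (\<Sum>k=1..K. - p k * (\<theta>0 k)\<^sup>2 / 2 + b k * \<theta>0 k + d k)" for \<theta>0
  proof -
    have "(\<Sum>k=1..K. - p k * (\<theta>0 k)\<^sup>2 / 2 + b k * \<theta>0 k + d k)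
        = (\<Sum>k=1..K. - (1 / 2) * (real (n0 k) * (m k - \<theta>0 k)\<^sup>2 / s0 k) - (1 / (2 * v)) * (\<theta>0 k - \<mu>)\<^sup>2)"
      using coord by simp
    then show ?thesis
      by (simp add: sum_subtractf sum_distrib_left sum_negf)
  qed
  have "(\<integral>\<^sup>+\<theta>0. ennreal (c * exp (X
            - (1 / 2) * (\<Sum>k=1..K. real (n0 k) * (m k - \<theta>0 k)\<^sup>2 / s0 k)
            - (\<theta> - \<mu>)\<^sup>2 / (2 * v)
            - (1 / (2 * v)) * (\<Sum>k=1..K. (\<theta>0 k - \<mu>)\<^sup>2))) \<partial>PiM {1..K} (\<lambda>_. lborel))
      = (\<integral>\<^sup>+\<theta>0. ennreal (c * exp (X - (\<theta> - \<mu>)\<^sup>2 / (2 * v)))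
          * ennreal (exp (\<Sum>k=1..K. - p k * (\<theta>0 k)\<^sup>2 / 2 + b k * \<theta>0 k + d k)) \<partial>PiM {1..K} (\<lambda>_. lborel))"
    unfolding exponent exp_add using c by (simp add: ennreal_mult' mult.assoc)
  also have "\<dots> = ennreal (c * exp (X - (\<theta> - \<mu>)\<^sup>2 / (2 * v)))
      * ennreal (\<Prod>k=1..K. sqrt (2 * pi / p k) * exp ((b k)\<^sup>2 / (2 * p k) + d k))"
    by (subst nn_integral_cmult, measurable, subst nn_integral_PiM_gaussian_kernels) (auto simp: p)
  finally show ?thesis
    unfolding m_def p_def b_def d_def using c by (simp add: ennreal_mult')
qed

lemma bhm_theta0_exponent:
  fixes y0 :: "nat \<Rightarrow> nat \<Rightarrow> real"
  assumes v: "v > 0"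
  defines "S \<equiv> \<Sum>k=1..K. Nk n0 s0 v k * Yk n0 s0 y0 k"
    and "U \<equiv> \<Sum>k=1..K. (Yk n0 s0 y0 k)\<^sup>2 * Nk n0 s0 v k"
    and "Z \<equiv> \<Sum>k=1..K. prec k * (mean (n0 k) (y0 k))\<^sup>2"
  shows "exp (X - (\<theta> - \<mu>)\<^sup>2 / (2 * v)) * (\<Prod>k=1..K.
           sqrt (2 * pi / (prec k + 1 / v)) * exp ((Yk n0 s0 y0 k + \<mu> / v)\<^sup>2 / (2 * (prec k + 1 / v))
             + (- (prec k * (mean (n0 k) (y0 k))\<^sup>2) / 2 - \<mu>\<^sup>2 / (2 * v))))
       = sqrt (2 * pi) ^ K * (\<Prod>k=1..K. sqrt (Nk n0 s0 v k))
           * exp (- Aa K n0 s0 v * \<mu>\<^sup>2 / 2 + (\<theta> / v + S / v) * \<mu> + (X - \<theta>\<^sup>2 / (2 * v) + U / 2 - Z / 2))"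
proof -
  have p: "prec k + 1 / v > 0" "Nk n0 s0 v k = 1 / (prec k + 1 / v)" if "k \<in> {1..K}" for k
    using prec_pos[OF that] v by (auto simp: Nk_eq add_pos_pos divide_inverse)
  have generic: "(Y + \<mu> / v)\<^sup>2 / (2 * q) + (- W / 2 - \<mu>\<^sup>2 / (2 * v))
      = Y\<^sup>2 * (1 / q) / 2 + \<mu> / v * (1 / q * Y) + \<mu>\<^sup>2 / (2 * v\<^sup>2) * (1 / q) - W / 2 - \<mu>\<^sup>2 / (2 * v)"
    if "q > 0" for q Y W :: real
    using that v by (simp add: power2_eq_square field_simps)
  have "(Yk n0 s0 y0 k + \<mu> / v)\<^sup>2 / (2 * (prec k + 1 / v))
        + (- (prec k * (mean (n0 k) (y0 k))\<^sup>2) / 2 - \<mu>\<^sup>2 / (2 * v))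
      = (Yk n0 s0 y0 k)\<^sup>2 * Nk n0 s0 v k / 2 + \<mu> / v * (Nk n0 s0 v k * Yk n0 s0 y0 k)
        + \<mu>\<^sup>2 / (2 * v\<^sup>2) * Nk n0 s0 v k - prec k * (mean (n0 k) (y0 k))\<^sup>2 / 2 - \<mu>\<^sup>2 / (2 * v)"
    if "k \<in> {1..K}" for k
    unfolding p(2)[OF that] by (rule generic[OF p(1)[OF that]])
  then have sum_eq: "(\<Sum>k=1..K. (Yk n0 s0 y0 k + \<mu> / v)\<^sup>2 / (2 * (prec k + 1 / v))
        + (- (prec k * (mean (n0 k) (y0 k))\<^sup>2) / 2 - \<mu>\<^sup>2 / (2 * v)))
      = U / 2 + \<mu> / v * S + \<mu>\<^sup>2 / (2 * v\<^sup>2) * (\<Sum>k=1..K. Nk n0 s0 v k) - Z / 2 - real K * (\<mu>\<^sup>2 / (2 * v))"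
    unfolding U_def S_def Z_def
    by (simp add: sum.distrib sum_subtractf sum_distrib_left sum_divide_distrib sum_negf)
  have quad: "X - (\<theta> - \<mu>)\<^sup>2 / (2 * v)
        + (U / 2 + \<mu> / v * S + \<mu>\<^sup>2 / (2 * v\<^sup>2) * N - Z / 2 - k * (\<mu>\<^sup>2 / (2 * v)))
      = - ((1 + k) / v - N / v\<^sup>2) * \<mu>\<^sup>2 / 2 + (\<theta> / v + S / v) * \<mu> + (X - \<theta>\<^sup>2 / (2 * v) + U / 2 - Z / 2)"
    for N k :: real
    using v by (simp add: power2_eq_square field_simps)
  have sqrt_prod: "(\<Prod>k=1..K. sqrt (2 * pi / (prec k + 1 / v)))
      = sqrt (2 * pi) ^ K * (\<Prod>k=1..K. sqrt (Nk n0 s0 v k))"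
    by (simp add: p(2) real_sqrt_divide prod.distrib divide_inverse real_sqrt_mult)
  show ?thesis
    unfolding prod.distrib exp_sum[OF finite_atLeastAtMost, symmetric]
    unfolding sum_eq sqrt_prod Aa_def quad[symmetric] exp_add
    by (simp only: mult_ac)
qed

lemma bhm_mu_closed_form_eq_Rf:
  fixes y0 :: "nat \<Rightarrow> nat \<Rightarrow> real" and y :: "nat \<Rightarrow> real" and n :: nat and s v \<theta> :: real
  assumes v: "v > 0"
  defines "A \<equiv> Aa K n0 s0 v" and "S \<equiv> \<Sum>k=1..K. Nk n0 s0 v k * Yk n0 s0 y0 k"
    and "U \<equiv> \<Sum>k=1..K. (Yk n0 s0 y0 k)\<^sup>2 * Nk n0 s0 v k"
    and "Z \<equiv> \<Sum>k=1..K. prec k * (mean (n0 k) (y0 k))\<^sup>2"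
    and "X \<equiv> - real n * (mean n y - \<theta>)\<^sup>2 / (2 * s)"
  shows "pv * v powr (- (real K + 1) / 2) * (sqrt (2 * pi) ^ K * (\<Prod>k=1..K. sqrt (Nk n0 s0 v k)))
           * (sqrt (2 * pi / A) * exp ((\<theta> / v + S / v)\<^sup>2 / (2 * A) + (X - \<theta>\<^sup>2 / (2 * v) + U / 2 - Z / 2)))
       = sqrt (2 * pi) ^ (K + 1) * exp (- Z / 2) * (Rf K n0 s0 y0 v * pv * cond_post_kernel K n0 s0 y0 n s y \<theta> v)"
proof -
  define T where "T = shrink v"
  define Q where "Q = - (T / (1 + T) / v) * \<theta>\<^sup>2 / 2 + S / (1 + T) / v * \<theta>"
  have T: "T > 0" and A: "A = (1 + T) / v" "A > 0"
    unfolding T_def A_def using shrinkage_sum_pos[OF v] Aa_eq[OF v] v by auto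
  have "(\<theta> / v + S / v)\<^sup>2 / (2 * (q / v)) - \<theta>\<^sup>2 / (2 * v)
      = S\<^sup>2 / (2 * v\<^sup>2 * (q / v)) + (- ((q - 1) / q / v) * \<theta>\<^sup>2 / 2 + S / q / v * \<theta>)"
    if "q > 0" for q
    using that v by (simp add: power2_eq_square field_simps)
  from this[of "1 + T"]
  have "(\<theta> / v + S / v)\<^sup>2 / (2 * A) - \<theta>\<^sup>2 / (2 * v) = S\<^sup>2 / (2 * v\<^sup>2 * A) + Q"
    unfolding A Q_def using T by simp
  then have exponent: "(\<theta> / v + S / v)\<^sup>2 / (2 * A) + (X - \<theta>\<^sup>2 / (2 * v) + U / 2 - Z / 2)
      = - Z / 2 + (S\<^sup>2 / (2 * v\<^sup>2 * A) + (1 / 2 * U + (X + Q)))"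
    by linarith
  have cond: "cond_post_kernel K n0 s0 y0 n s y \<theta> v = exp (X + Q)"
    unfolding cond_post_kernel_def fK_eq Cc_eq[OF v] X_def Q_def S_def[symmetric] T_def[symmetric]
    using v T by (simp add: field_simps)
  have "A powr (- 1 / 2) = 1 / sqrt A"
    using \<open>A > 0\<close> by (simp add: powr_minus_divide powr_half_sqrt)
  moreover have "sqrt (2 * pi / A) = sqrt (2 * pi) / sqrt A"
    by (simp add: real_sqrt_divide)
  moreover have "(\<Sum>k=1..K. Yk n0 s0 y0 k * Nk n0 s0 v k) = S"
    unfolding S_def by (simp add: mult.commute)
  ultimately show ?thesis
    unfolding exponent exp_add cond Rf_def A_def[symmetric] U_def[symmetric]
    by (simp add: mult_ac)
qed

lemma bhm_inner_integral:
  fixes y0 :: "nat \<Rightarrow> nat \<Rightarrow> real" and y :: "nat \<Rightarrow> real"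
  assumes v: "v > 0" and pv: "pv \<ge> 0"
  shows "(\<integral>\<^sup>+\<mu>. (\<integral>\<^sup>+\<theta>0. ennreal (pv * v powr (- (real K + 1) / 2) *
            exp (- real n * (mean n y - \<theta>)\<^sup>2 / (2 * s)
              - (1 / 2) * (\<Sum>k=1..K. real (n0 k) * (mean (n0 k) (y0 k) - \<theta>0 k)\<^sup>2 / s0 k)
              - (\<theta> - \<mu>)\<^sup>2 / (2 * v)
              - (1 / (2 * v)) * (\<Sum>k=1..K. (\<theta>0 k - \<mu>)\<^sup>2)))
          \<partial>PiM {1..K} (\<lambda>_. lborel)) \<partial>lborel)
       = ennreal (sqrt (2 * pi) ^ (K + 1) * exp (- (\<Sum>k=1..K. prec k * (mean (n0 k) (y0 k))\<^sup>2) / 2)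
           * (Rf K n0 s0 y0 v * pv * cond_post_kernel K n0 s0 y0 n s y \<theta> v))"
proof -
  define c where "c = pv * v powr (- (real K + 1) / 2) * (sqrt (2 * pi) ^ K * (\<Prod>k=1..K. sqrt (Nk n0 s0 v k)))"
  define X where "X = - real n * (mean n y - \<theta>)\<^sup>2 / (2 * s)"
  define S where "S = (\<Sum>k=1..K. Nk n0 s0 v k * Yk n0 s0 y0 k)"
  define U where "U = (\<Sum>k=1..K. (Yk n0 s0 y0 k)\<^sup>2 * Nk n0 s0 v k)"
  define Z where "Z = (\<Sum>k=1..K. prec k * (mean (n0 k) (y0 k))\<^sup>2)"
  define A where "A = Aa K n0 s0 v"
  have "A > 0"
    unfolding A_def using shrinkage_sum_pos[OF v] Aa_eq[OF v] v by auto
  have c: "c \<ge> 0"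
    unfolding c_def using pv Nk_pos[OF v] by (intro mult_nonneg_nonneg prod_nonneg) (auto simp: less_imp_le)
  have "(\<integral>\<^sup>+\<mu>. (\<integral>\<^sup>+\<theta>0. ennreal (pv * v powr (- (real K + 1) / 2) *
            exp (X - (1 / 2) * (\<Sum>k=1..K. real (n0 k) * (mean (n0 k) (y0 k) - \<theta>0 k)\<^sup>2 / s0 k)
              - (\<theta> - \<mu>)\<^sup>2 / (2 * v) - (1 / (2 * v)) * (\<Sum>k=1..K. (\<theta>0 k - \<mu>)\<^sup>2)))
          \<partial>PiM {1..K} (\<lambda>_. lborel)) \<partial>lborel)
      = (\<integral>\<^sup>+\<mu>. ennreal c * ennreal (exp (- A * \<mu>\<^sup>2 / 2 + (\<theta> / v + S / v) * \<mu>
            + (X - \<theta>\<^sup>2 / (2 * v) + U / 2 - Z / 2))) \<partial>lborel)"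
  proof (intro nn_integral_cong)
    fix \<mu>
    have "0 \<le> pv * v powr (- (real K + 1) / 2)"
      using pv by simp
    from bhm_theta0_integral[OF v this, where X = X and \<theta> = \<theta> and \<mu> = \<mu>]
    show "(\<integral>\<^sup>+\<theta>0. ennreal (pv * v powr (- (real K + 1) / 2) *
            exp (X - (1 / 2) * (\<Sum>k=1..K. real (n0 k) * (mean (n0 k) (y0 k) - \<theta>0 k)\<^sup>2 / s0 k)
              - (\<theta> - \<mu>)\<^sup>2 / (2 * v) - (1 / (2 * v)) * (\<Sum>k=1..K. (\<theta>0 k - \<mu>)\<^sup>2)))
          \<partial>PiM {1..K} (\<lambda>_. lborel))
      = ennreal c * ennreal (exp (- A * \<mu>\<^sup>2 / 2 + (\<theta> / v + S / v) * \<mu>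
            + (X - \<theta>\<^sup>2 / (2 * v) + U / 2 - Z / 2)))"
      unfolding mult.assoc bhm_theta0_exponent[OF v] ennreal_mult'[OF c, symmetric]
      unfolding c_def A_def S_def U_def Z_def by (simp only: mult.assoc)
  qed
  also have "\<dots> = ennreal c * (\<integral>\<^sup>+\<mu>. ennreal (exp (- A * \<mu>\<^sup>2 / 2 + (\<theta> / v + S / v) * \<mu>
            + (X - \<theta>\<^sup>2 / (2 * v) + U / 2 - Z / 2))) \<partial>lborel)"
    by (rule nn_integral_cmult) measurable
  also have "\<dots> = ennreal (c * (sqrt (2 * pi / A) * exp ((\<theta> / v + S / v)\<^sup>2 / (2 * A)
            + (X - \<theta>\<^sup>2 / (2 * v) + U / 2 - Z / 2))))"
    unfolding nn_integral_gaussian_kernel[OF \<open>A > 0\<close>] using c by (simp add: ennreal_mult')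
  finally show ?thesis
    unfolding c_def A_def S_def U_def Z_def X_def bhm_mu_closed_form_eq_Rf[OF v] .
qed

lemma bhm_kernel_mixture:
  fixes y0 :: "nat \<Rightarrow> nat \<Rightarrow> real" and y :: "nat \<Rightarrow> real" and piv :: "real \<Rightarrow> real"
  assumes [measurable]: "piv \<in> borel_measurable borel" and piv: "\<And>v. v > 0 \<Longrightarrow> piv v \<ge> 0"
  shows "\<exists>\<kappa>>0. \<forall>\<theta>. bhm_kernel K n0 s0 y0 n s y piv \<theta> = ennreal \<kappa> *
           (\<integral>\<^sup>+v. indicator {0<..} v * ennreal (Rf K n0 s0 y0 v * piv v
              * cond_post_kernel K n0 s0 y0 n s y \<theta> v) \<partial>lborel)"
proof (intro exI conjI allI)
  define \<kappa> where "\<kappa> = sqrt (2 * pi) ^ (K + 1) * exp (- (\<Sum>k=1..K. prec k * (mean (n0 k) (y0 k))\<^sup>2) / 2)"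
  show "\<kappa> > 0"
    unfolding \<kappa>_def by simp
  fix \<theta>
  have "bhm_kernel K n0 s0 y0 n s y piv \<theta> = (\<integral>\<^sup>+v. ennreal \<kappa> * (indicator {0<..} v
      * ennreal (Rf K n0 s0 y0 v * piv v * cond_post_kernel K n0 s0 y0 n s y \<theta> v)) \<partial>lborel)"
    unfolding bhm_kernel_def
  proof (intro nn_integral_cong)
    fix v :: real
    show "indicator {0<..} v * (\<integral>\<^sup>+\<mu>. (\<integral>\<^sup>+\<theta>0. ennreal (piv v * v powr (- (real K + 1) / 2) *
            exp (- real n * (mean n y - \<theta>)\<^sup>2 / (2 * s)
              - (1 / 2) * (\<Sum>k=1..K. real (n0 k) * (mean (n0 k) (y0 k) - \<theta>0 k)\<^sup>2 / s0 k)
              - (\<theta> - \<mu>)\<^sup>2 / (2 * v)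
              - (1 / (2 * v)) * (\<Sum>k=1..K. (\<theta>0 k - \<mu>)\<^sup>2)))
          \<partial>PiM {1..K} (\<lambda>_. lborel)) \<partial>lborel)
      = ennreal \<kappa> * (indicator {0<..} v
          * ennreal (Rf K n0 s0 y0 v * piv v * cond_post_kernel K n0 s0 y0 n s y \<theta> v))"
    proof (cases "v > 0")
      case True
      show ?thesis
        unfolding bhm_inner_integral[OF True piv[OF True]] \<kappa>_def[symmetric]
        using True \<open>\<kappa> > 0\<close> by (simp add: ennreal_mult')
    qed simp
  qed
  also have "\<dots> = ennreal \<kappa> * (\<integral>\<^sup>+v. indicator {0<..} v
      * ennreal (Rf K n0 s0 y0 v * piv v * cond_post_kernel K n0 s0 y0 n s y \<theta> v) \<partial>lborel)"
    by (rule nn_integral_cmult) measurable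
  finally show "bhm_kernel K n0 s0 y0 n s y piv \<theta> = ennreal \<kappa> *
      (\<integral>\<^sup>+v. indicator {0<..} v * ennreal (Rf K n0 s0 y0 v * piv v
         * cond_post_kernel K n0 s0 y0 n s y \<theta> v) \<partial>lborel)" .
qed

end

theorem theorem2p2:
  fixes K n :: nat and n0 :: "nat \<Rightarrow> nat" and s0 :: "nat \<Rightarrow> real"
    and y0 :: "nat \<Rightarrow> nat \<Rightarrow> real" and s :: real and y :: "nat \<Rightarrow> real"
    and piv pia :: "real \<Rightarrow> real"
  assumes K: "K \<ge> 1" and n: "n \<ge> 1" and s: "s > 0"
    and n0: "\<And>k. k \<in> {1..K} \<Longrightarrow> n0 k \<ge> 1"
    and s0: "\<And>k. k \<in> {1..K} \<Longrightarrow> s0 k > 0"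
    and piv_meas: "piv \<in> borel_measurable borel"
    and pia_meas: "pia \<in> borel_measurable borel"
    and piv_nonneg: "\<And>v. v > 0 \<Longrightarrow> piv v \<ge> 0"
    and pia_nonneg: "\<And>a. a \<in> {1 / (real K + 1)<..<1} \<Longrightarrow> pia a \<ge> 0"
    and prior_match: "\<exists>c>0. \<forall>v>0.
        Qf K n0 s0 y0 v * \<bar>deriv (fK K n0 s0) v\<bar> * pia (fK K n0 s0 v)
          = c * (Rf K n0 s0 y0 v * piv v)"
    and bhm_proper: "0 < (\<integral>\<^sup>+ t. bhm_kernel K n0 s0 y0 n s y piv t \<partial>lborel)"
                    "(\<integral>\<^sup>+ t. bhm_kernel K n0 s0 y0 n s y piv t \<partial>lborel) < \<infinity>"
    and bnpp_proper: "0 < (\<integral>\<^sup>+ t. bnpp_kernel K n0 s0 y0 n s y pia t \<partial>lborel)"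
                    "(\<integral>\<^sup>+ t. bnpp_kernel K n0 s0 y0 n s y pia t \<partial>lborel) < \<infinity>"
  shows "(\<forall>\<theta>. bhm_post K n0 s0 y0 n s y piv \<theta> = bnpp_post K n0 s0 y0 n s y pia \<theta>)
       \<and> (\<forall>a0 \<in> {1 / (real K + 1)<..<1}. \<forall>k \<in> {1..K}.
            0 < hk K n0 s0 k a0 \<and> hk K n0 s0 k a0 < 1)"
proof
  interpret historical_data K n0 s0
    using K n0 s0 by unfold_locales
  note [measurable] = piv_meas pia_meas
  define H where "H \<theta> = (\<integral>\<^sup>+v. indicator {0<..} v
    * ennreal (Rf K n0 s0 y0 v * piv v * cond_post_kernel K n0 s0 y0 n s y \<theta> v) \<partial>lborel)" for \<theta>
  obtain c where "c > 0" and match: "\<And>v. v > 0 \<Longrightarrow>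
      Qf K n0 s0 y0 v * \<bar>deriv (fK K n0 s0) v\<bar> * pia (fK K n0 s0 v) = c * (Rf K n0 s0 y0 v * piv v)"
    using prior_match by blast
  obtain \<kappa>1 where "\<kappa>1 > 0" and bhm: "\<And>\<theta>. bhm_kernel K n0 s0 y0 n s y piv \<theta> = ennreal \<kappa>1 * H \<theta>"
    using bhm_kernel_mixture[OF piv_meas piv_nonneg] unfolding H_def by blast
  have "(\<lambda>v. Rf K n0 s0 y0 v * piv v) \<in> borel_measurable borel"
    by measurable
  from nn_integral_pos_cmult_cong[OF less_imp_le[OF \<open>c > 0\<close>] match this measurable_cond_post_kernel]
  have prior_integral: "(\<integral>\<^sup>+v. indicator {0<..} v * ennreal (Qf K n0 s0 y0 v * \<bar>deriv (fK K n0 s0) v\<bar>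
      * pia (fK K n0 s0 v) * cond_post_kernel K n0 s0 y0 n s y \<theta> v) \<partial>lborel) = ennreal c * H \<theta>" for \<theta>
    unfolding H_def .
  obtain \<kappa>2 where "\<kappa>2 > 0" and bnpp: "\<And>\<theta>. bnpp_kernel K n0 s0 y0 n s y pia \<theta> = ennreal \<kappa>2 * (ennreal c * H \<theta>)"
    using bnpp_kernel_mixture[OF n pia_meas, of y0 s y] unfolding prior_integral by (elim exE conjE) auto
  have "H \<in> borel_measurable lborel"
    unfolding H_def by measurable
  then show "\<forall>\<theta>. bhm_post K n0 s0 y0 n s y piv \<theta> = bnpp_post K n0 s0 y0 n s y pia \<theta>"
    unfolding bhm_post_def bnpp_post_def using \<open>\<kappa>1 > 0\<close> \<open>\<kappa>2 > 0\<close> \<open>c > 0\<close>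
    by (intro allI normalized_eq_if_proportional[where c = \<kappa>1 and d = "\<kappa>2 * c"])
       (auto simp: bhm bnpp ennreal_mult mult.assoc)
  show "\<forall>a0 \<in> {1 / (real K + 1)<..<1}. \<forall>k \<in> {1..K}. 0 < hk K n0 s0 k a0 \<and> hk K n0 s0 k a0 < 1"
    using hk_bounds by blast
qed

end
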